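(* Assume $2k+1 \le n/4$. Consider the random hard instance $\mathcal{D}$ and any randomized algorithm that makes exactly $n/4$ comparison queries. Let $C$ be the set of critical elements and $T$ the (random) set of elements that appear in at least one query made by the algorithm. Then $\mathbb{E}[|C \cap T|] \le \frac{2k+1}{2}$.
   Context: Model: $n$ elements, exactly $k$ corrupted; a tournament (comparison graph) says for each pair which is larger; restricted to uncorrupted elements it is acyclic, comparisons involving corrupted elements arbitrary. A comparison query reveals the orientation of one pair. Random hard instance $\mathcal{D}$: take $2k+1$ critical elements $c_0,\dots,c_{2k}$ consisting of the $k$ corrupted elements and the top $k+1$ uncorrupted elements, with comparisons among them forming the cyclic tournament in which $c_i$ is larger than $c_{i+1},\dots,c_{i+k}$ (indices mod $2k+1$); every critical element is larger than every non-critical element, and the $n-2k-1$ non-critical (uncorrupted) elements are totally ordered; then the labels (indices) of all $n$ elements are permuted uniformly at random. The set of critical elements is denoted $C$. Expectations are over the instance randomness and the algorithm's randomness. *)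

theory Defs
  imports "HOL-Probability.Probability" "HOL-Combinatorics.Permutations"
begin

text \<open>Positions 0..2k are the critical elements c_0..c_2k; positions 2k+1..n-1 are the
  non-critical elements, totally ordered (smaller position = larger element).
  canon_gt k i j means: the element at position i is larger than the one at position j.\<close>
definition canon_gt :: "nat \<Rightarrow> nat \<Rightarrow> nat \<Rightarrow> bool" where
  "canon_gt k i j =
     (if i < 2*k+1 \<and> j < 2*k+1 then (j + (2*k+1) - i) mod (2*k+1) \<in> {1..k}
      else if i < 2*k+1 then True
      else if j < 2*k+1 then False
      else i < j)"

text \<open>Labelled instance: sigma maps each label (element) to its canonical position;
  sigma is a uniformly random permutation of {0..<n}.\<close>
definition inst_gt :: "nat \<Rightarrow> (nat \<Rightarrow> nat) \<Rightarrow> nat \<Rightarrow> nat \<Rightarrow> bool" where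
  "inst_gt k p a b = canon_gt k (p a) (p b)"

definition critical :: "nat \<Rightarrow> nat \<Rightarrow> (nat \<Rightarrow> nat) \<Rightarrow> nat set" where
  "critical n k p = {a \<in> {0..<n}. p a < 2*k+1}"

definition hard_instance :: "nat \<Rightarrow> (nat \<Rightarrow> nat) pmf" where
  "hard_instance n = pmf_of_set {p. p permutes {0..<n}}"

text \<open>A deterministic adaptive comparison strategy: given the history of past queries
  and their answers, choose the next pair to compare.  A randomized algorithm is a
  probability distribution over such strategies (its random seed), independent of the
  instance.\<close>
type_synonym history = "((nat \<times> nat) \<times> bool) list"
type_synonym strategy = "history \<Rightarrow> nat \<times> nat"

fun run :: "strategy \<Rightarrow> (nat \<Rightarrow> nat \<Rightarrow> bool) \<Rightarrow> nat \<Rightarrow> history" where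
  "run s g 0 = []"
| "run s g (Suc m) = (let h = run s g m; q = s h in h @ [(q, g (fst q) (snd q))])"

definition touched :: "history \<Rightarrow> nat set" where
  "touched h = (\<Union>e \<in> set h. {fst (fst e), snd (fst e)})"

definition valid_strategy :: "nat \<Rightarrow> strategy \<Rightarrow> bool" where
  "valid_strategy n s = (\<forall>h. fst (s h) < n \<and> snd (s h) < n \<and> fst (s h) \<noteq> snd (s h))"

end

theory Submission
  imports Defs
begin

text \<open>A comparison of two elements is answered by revealing their canonical positions, so the
  algorithm is simulated by an adaptive probing strategy that reveals the position of one element
  per step and makes twice as many probes as the algorithm makes queries. Once the positions of a
  set S of elements are known, the uniform permutation conditioned on them is uniform over the
  permutations that extend them, so a fresh probe lands on each of the n - |S| unused positions
  with equal probability. Induction on the number of probes shows that m probes hit on average at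
  most m c / (n - |S|) of the c unused critical positions; for S empty, c = 2k+1 and
  m = 2 (n div 4) \<le> n/2 this is the bound (2k+1)/2.\<close>

lemma card_remove_filter:
  assumes "finite U" "v \<in> U"
  shows "real (card {w \<in> U - {v}. P w}) = real (card {w \<in> U. P w}) - of_bool (P v)"
proof (cases "P v")
  case True
  hence "{w \<in> U. P w} = insert v {w \<in> U - {v}. P w}" using assms(2) by auto
  thus ?thesis using True assms(1) by simp
next
  case False
  hence "{w \<in> U. P w} = {w \<in> U - {v}. P w}" by auto
  thus ?thesis using False by simp
qed

lemma sum_card_remove_filter:
  assumes "finite U"
  shows "(\<Sum>v\<in>U. real (card {w \<in> U - {v}. P w})) = (real (card U) - 1) * card {w \<in> U. P w}"
proof -
  have "(\<Sum>v\<in>U. of_bool (P v) :: real) = card {w \<in> U. P w}"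
    using assms by (simp add: sum.inter_filter[symmetric] Int_def)
  moreover have "(\<Sum>v\<in>U. real (card {w \<in> U - {v}. P w}))
      = (\<Sum>v\<in>U. real (card {w \<in> U. P w}) - of_bool (P v))"
    using card_remove_filter[OF assms] by (intro sum.cong) auto
  ultimately show ?thesis by (simp add: sum_subtractf algebra_simps)
qed

text \<open>For card U = 1 the quotient is 0 (as x / 0 = 0), and the bound still holds.\<close>

lemma mean_of_bool_plus_remove_le:
  assumes "finite U"
  shows "(\<Sum>v\<in>U. of_bool (P v) + real (m * card {w \<in> U - {v}. P w}) / (real (card U) - 1)) / card U
    \<le> Suc m * card {w \<in> U. P w} / card U"
proof -
  define c where "c = card {w \<in> U. P w}"
  have "(\<Sum>v\<in>U. of_bool (P v) :: real) = c" using assms by (simp add: c_def Int_def)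
  hence "(\<Sum>v\<in>U. of_bool (P v) + real (m * card {w \<in> U - {v}. P w}) / (real (card U) - 1))
      = c + m * ((real (card U) - 1) * c) / (real (card U) - 1)"
    unfolding sum.distrib of_nat_mult sum_divide_distrib[symmetric] sum_distrib_left[symmetric]
      sum_card_remove_filter[OF assms] c_def
    by (rule arg_cong)
  moreover have "m * ((real (card U) - 1) * c) / (real (card U) - 1) \<le> m * c"
    by (cases "real (card U) - 1 = 0") auto
  ultimately show ?thesis by (simp add: c_def divide_right_mono)
qed

lemma expectation_pair_pmf_of_set_le:
  fixes f :: "'a \<times> 'b \<Rightarrow> real" and b :: real
  assumes P: "finite P" "P \<noteq> {}" and f: "\<And>x. 0 \<le> f x"
    and mean: "\<And>s. s \<in> set_pmf A \<Longrightarrow> (\<Sum>p\<in>P. f (p, s)) / card P \<le> b"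
  shows "measure_pmf.expectation (pair_pmf (pmf_of_set P) A) f \<le> b"
proof -
  have bound: "(\<Sum>p\<in>P. f (p, s)) \<le> real (card P) * b" if "s \<in> set_pmf A" for s
    using mean[OF that] P by (simp add: pos_divide_le_eq card_gt_0_iff mult.commute)
  obtain s0 where "s0 \<in> set_pmf A" using set_pmf_not_empty[of A] by blast
  hence b: "0 \<le> b"
    using mean f by (meson order_trans sum_nonneg divide_nonneg_nonneg of_nat_0_le_iff)
  have "(\<integral>\<^sup>+x. f x \<partial>pair_pmf (pmf_of_set P) A) = (\<Sum>p\<in>P. \<integral>\<^sup>+s. f (p, s) \<partial>A) / card P"
    by (simp add: nn_integral_pair_pmf' nn_integral_pmf_of_set[OF P(2,1)])
  also have "(\<Sum>p\<in>P. \<integral>\<^sup>+s. f (p, s) \<partial>A) = (\<integral>\<^sup>+s. (\<Sum>p\<in>P. ennreal (f (p, s))) \<partial>A)"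
    by (rule nn_integral_sum[symmetric]) simp
  also have "\<dots> = (\<integral>\<^sup>+s. ennreal (\<Sum>p\<in>P. f (p, s)) \<partial>A)"
    using f by (simp add: sum_ennreal)
  also have "\<dots> \<le> (\<integral>\<^sup>+s. ennreal (real (card P) * b) \<partial>A)"
    using bound by (intro nn_integral_mono_AE AE_pmfI ennreal_leI)
  finally have "(\<integral>\<^sup>+x. f x \<partial>pair_pmf (pmf_of_set P) A) \<le> ennreal (real (card P) * b) / card P"
    by (simp add: divide_right_mono_ennreal)
  also have "\<dots> = ennreal b"
    using P b by (simp add: ennreal_of_nat_eq_real_of_nat ennreal_mult mult_divide_eq_ennreal
        mult.commute[of "ennreal (card P)"])
  finally show ?thesis
    using b f by (simp add: integral_eq_nn_integral enn2real_leI)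
qed

definition extensions :: "nat \<Rightarrow> nat set \<Rightarrow> (nat \<Rightarrow> nat) \<Rightarrow> (nat \<Rightarrow> nat) set" where
  "extensions n S q = {p. p permutes {0..<n} \<and> (\<forall>a\<in>S. p a = q a)}"

lemma extensions_eq_image:
  assumes q: "q permutes {0..<n}" and S: "S \<subseteq> {0..<n}"
  shows "extensions n S q = (\<lambda>r. q \<circ> r) ` {r. r permutes ({0..<n} - S)}"
proof (intro set_eqI iffI)
  fix p assume "p \<in> extensions n S q"
  hence p: "p permutes {0..<n}" and pS: "\<forall>a\<in>S. p a = q a" by (auto simp: extensions_def)
  define r where "r = inv q \<circ> p"
  have "r permutes {0..<n}" unfolding r_def by (intro permutes_compose p permutes_inv q)
  hence "r permutes ({0..<n} - S)"
    by (rule permutes_superset) (use pS permutes_inverses(2)[OF q] in \<open>auto simp: r_def\<close>)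
  moreover have "p = q \<circ> r" unfolding r_def using permutes_inv_o(1)[OF q] by (simp add: o_assoc)
  ultimately show "p \<in> (\<lambda>r. q \<circ> r) ` {r. r permutes ({0..<n} - S)}" by blast
next
  fix p assume "p \<in> (\<lambda>r. q \<circ> r) ` {r. r permutes ({0..<n} - S)}"
  then obtain r where r: "r permutes ({0..<n} - S)" and pr: "p = q \<circ> r" by blast
  have "r permutes {0..<n}" using permutes_subset[OF r] by auto
  hence "p permutes {0..<n}" using pr q permutes_compose by blast
  moreover have "\<forall>a\<in>S. p a = q a" using pr permutes_not_in[OF r] by auto
  ultimately show "p \<in> extensions n S q" by (simp add: extensions_def)
qed

lemma card_extensions:
  assumes q: "q permutes {0..<n}" and S: "S \<subseteq> {0..<n}"
  shows "card (extensions n S q) = fact (n - card S)"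
proof -
  have "inj (\<lambda>r. q \<circ> r)"
    using permutes_inj[OF q] by (metis fun.inj_map)
  hence "card (extensions n S q) = card {r. r permutes ({0..<n} - S)}"
    unfolding extensions_eq_image[OF q S] by (meson card_image inj_on_subset subset_UNIV)
  also have "\<dots> = fact (n - card S)"
    by (rule card_permutations) (use S in \<open>auto simp: card_Diff_subset finite_subset\<close>)
  finally show ?thesis .
qed

lemma finite_extensions: "finite (extensions n S q)"
  by (rule finite_subset[OF _ finite_permutations[of "{0..<n}"]]) (auto simp: extensions_def)

lemma card_unused_positions:
  assumes q: "q permutes {0..<n}" and S: "S \<subseteq> {0..<n}"
  shows "card ({0..<n} - q ` S) = n - card S"
proof -
  have "q ` S \<subseteq> {0..<n}" using S permutes_in_image[OF q] by auto
  moreover have "card (q ` S) = card S"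
    using permutes_inj[OF q] by (simp add: card_image inj_on_subset)
  ultimately show ?thesis by (simp add: card_Diff_subset finite_subset)
qed

lemma extension_value_unused:
  assumes p: "p \<in> extensions n S q" and a: "a \<in> {0..<n} - S"
  shows "p a \<in> {0..<n} - q ` S"
proof -
  have pp: "p permutes {0..<n}" and pS: "\<forall>b\<in>S. p b = q b" using p by (auto simp: extensions_def)
  have "p a \<noteq> q b" if "b \<in> S" for b
    using that a pS permutes_inj[OF pp] by (metis DiffD2 injD)
  thus ?thesis using permutes_in_image[OF pp] a by auto
qed

definition redirect :: "(nat \<Rightarrow> nat) \<Rightarrow> nat \<Rightarrow> nat \<Rightarrow> nat \<Rightarrow> nat" where
  "redirect q a v = Transposition.transpose v (q a) \<circ> q"

lemma
  assumes q: "q permutes {0..<n}" and S: "S \<subseteq> {0..<n}" and a: "a \<in> {0..<n} - S"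
    and v: "v \<in> {0..<n} - q ` S"
  shows redirect_permutes: "redirect q a v permutes {0..<n}"
    and redirect_image: "redirect q a v ` insert a S = insert v (q ` S)"
    and extensions_with_value:
      "{p \<in> extensions n S q. p a = v} = extensions n (insert a S) (redirect q a v)"
proof -
  have qa: "q a \<in> {0..<n}" using a permutes_in_image[OF q] by auto
  have on_S: "redirect q a v b = q b" if "b \<in> S" for b
  proof -
    have "q b \<noteq> q a" using that a permutes_inj[OF q] by (metis DiffD2 injD)
    moreover have "q b \<noteq> v" using that v by auto
    ultimately show ?thesis by (simp add: redirect_def transpose_def)
  qed
  have at_a: "redirect q a v a = v" by (simp add: redirect_def transpose_def)
  show "redirect q a v permutes {0..<n}"
    unfolding redirect_def by (intro permutes_compose q permutes_swap_id) (use v qa in auto)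
  show "redirect q a v ` insert a S = insert v (q ` S)"
    using on_S at_a by auto
  show "{p \<in> extensions n S q. p a = v} = extensions n (insert a S) (redirect q a v)"
    using on_S at_a unfolding extensions_def by auto
qed

lemma sum_extensions_by_value:
  assumes q: "q permutes {0..<n}" and S: "S \<subseteq> {0..<n}" and a: "a \<in> {0..<n} - S"
  shows "(\<Sum>p\<in>extensions n S q. f p)
       = (\<Sum>v\<in>{0..<n} - q ` S. \<Sum>p\<in>extensions n (insert a S) (redirect q a v). f p)"
proof -
  have "(\<Sum>p\<in>extensions n S q. f p) = (\<Sum>v\<in>{0..<n} - q ` S. \<Sum>p\<in>{p \<in> extensions n S q. p a = v}. f p)"
    by (rule sum.group[symmetric]) (use extension_value_unused[OF _ a] finite_extensions in auto)
  also have "\<dots> = (\<Sum>v\<in>{0..<n} - q ` S. \<Sum>p\<in>extensions n (insert a S) (redirect q a v). f p)"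
    by (intro sum.cong refl) (simp add: extensions_with_value[OF q S a])
  finally show ?thesis .
qed

lemma mean_extensions_by_value:
  fixes f :: "(nat \<Rightarrow> nat) \<Rightarrow> real"
  assumes q: "q permutes {0..<n}" and S: "S \<subseteq> {0..<n}" and a: "a \<in> {0..<n} - S"
  shows "(\<Sum>p\<in>extensions n S q. f p) / card (extensions n S q)
       = (\<Sum>v\<in>{0..<n} - q ` S. (\<Sum>p\<in>extensions n (insert a S) (redirect q a v). f p)
            / card (extensions n (insert a S) (redirect q a v))) / (n - card S)"
proof -
  define U where "U = {0..<n} - q ` S"
  define F :: real where "F = fact (n - card S - 1)"
  have "q a \<in> U"
    unfolding U_def by (rule extension_value_unused[OF _ a]) (simp add: extensions_def q)
  moreover have "card U = n - card S" unfolding U_def by (rule card_unused_positions[OF q S])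
  ultimately have N: "n - card S \<ge> 1" using card_gt_0_iff[of U] by (force simp: U_def)
  have card_E: "real (card (extensions n S q)) = (n - card S) * F"
    using card_extensions[OF q S] N by (simp add: F_def fact_reduce)
  have "real (card (extensions n (insert a S) (redirect q a v))) = F" if "v \<in> U" for v
    using card_extensions[OF redirect_permutes[OF q S a], of v "insert a S"] that a S
    by (simp add: F_def U_def finite_subset)
  hence fibers: "(\<Sum>v\<in>U. (\<Sum>p\<in>extensions n (insert a S) (redirect q a v). f p)
        / card (extensions n (insert a S) (redirect q a v)))
      = (\<Sum>v\<in>U. \<Sum>p\<in>extensions n (insert a S) (redirect q a v). f p) / F"
    unfolding sum_divide_distrib by (intro sum.cong) auto
  show ?thesis
    unfolding sum_extensions_by_value[OF q S a] U_def[symmetric] fibers card_E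
    by (simp add: divide_divide_eq_left mult.commute)
qed

fun probes :: "((nat \<times> nat) list \<Rightarrow> nat) \<Rightarrow> (nat \<Rightarrow> nat) \<Rightarrow> (nat \<times> nat) list \<Rightarrow> nat
    \<Rightarrow> (nat \<times> nat) list" where
  "probes t p h 0 = h"
| "probes t p h (Suc m) = probes t p (h @ [(t h, p (t h))]) m"

definition fresh_hits :: "nat set \<Rightarrow> nat \<Rightarrow> (nat \<Rightarrow> nat) \<Rightarrow> (nat \<times> nat) list \<Rightarrow> nat" where
  "fresh_hits S R p h = card {a \<in> fst ` set h - S. p a < R}"

lemma fresh_hits_insert_le:
  "real (fresh_hits S R p h) \<le> of_bool (p a < R) + real (fresh_hits (insert a S) R p h)"
proof -
  define L where "L = fst ` set h"
  have "{b \<in> L - S. p b < R} \<subseteq> {b \<in> {a}. p b < R} \<union> {b \<in> L - insert a S. p b < R}" by auto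
  hence "card {b \<in> L - S. p b < R} \<le> card ({b \<in> {a}. p b < R} \<union> {b \<in> L - insert a S. p b < R})"
    by (intro card_mono) (auto simp: L_def)
  also have "\<dots> \<le> card {b \<in> {a}. p b < R} + card {b \<in> L - insert a S. p b < R}"
    by (rule card_Un_le)
  also have "{b \<in> {a}. p b < R} = (if p a < R then {a} else {})" by auto
  finally show ?thesis by (cases "p a < R") (simp_all add: fresh_hits_def L_def)
qed

lemma mean_fresh_hits_probe_le:
  assumes q: "q permutes {0..<n}" and S: "S \<subseteq> {0..<n}" and a: "t h \<in> {0..<n} - S"
    and v: "v \<in> {0..<n} - q ` S"
  defines "E \<equiv> extensions n (insert (t h) S) (redirect q (t h) v)"
  shows "(\<Sum>p\<in>E. real (fresh_hits S R p (probes t p h (Suc m)))) / card E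
     \<le> of_bool (v < R)
        + (\<Sum>p\<in>E. real (fresh_hits (insert (t h) S) R p (probes t p (h @ [(t h, v)]) m))) / card E"
proof -
  have "card E > 0"
    unfolding E_def using card_extensions[OF redirect_permutes[OF q S a v], of "insert (t h) S"] a S
    by simp
  have "p (t h) = v" if "p \<in> E" for p
    using that extensions_with_value[OF q S a v] by (auto simp: E_def)
  hence "(\<Sum>p\<in>E. real (fresh_hits S R p (probes t p h (Suc m)))) / card E
      \<le> (\<Sum>p\<in>E. of_bool (v < R)
            + real (fresh_hits (insert (t h) S) R p (probes t p (h @ [(t h, v)]) m))) / card E"
    by (intro divide_right_mono sum_mono) (simp_all add: fresh_hits_insert_le)
  also have "\<dots> = of_bool (v < R)
      + (\<Sum>p\<in>E. real (fresh_hits (insert (t h) S) R p (probes t p (h @ [(t h, v)]) m))) / card E"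
    using \<open>card E > 0\<close> by (simp add: sum.distrib add_divide_distrib)
  finally show ?thesis .
qed

lemma mean_fresh_hits_probes_le:
  assumes "q permutes {0..<n}" and "S \<subseteq> {0..<n}" and "fst ` set h \<subseteq> S" and t: "\<forall>h. t h < n"
  shows "(\<Sum>p\<in>extensions n S q. real (fresh_hits S R p (probes t p h m))) / card (extensions n S q)
     \<le> m * card {w \<in> {0..<n} - q ` S. w < R} / (n - card S)"
  using assms(1-3)
proof (induction m arbitrary: S q h)
  case 0
  hence "fresh_hits S R p h = 0" for p by (auto simp: fresh_hits_def)
  thus ?case by simp
next
  case (Suc m)
  note q = Suc.prems(1) and S = Suc.prems(2) and hS = Suc.prems(3)
  show ?case
  proof (cases "t h \<in> S")
    case True
    hence "probes t p h (Suc m) = probes t p (h @ [(t h, q (t h))]) m"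
      if "p \<in> extensions n S q" for p
      using that by (simp add: extensions_def)
    hence "(\<Sum>p\<in>extensions n S q. real (fresh_hits S R p (probes t p h (Suc m))))
          / card (extensions n S q)
        = (\<Sum>p\<in>extensions n S q. real (fresh_hits S R p (probes t p (h @ [(t h, q (t h))]) m)))
          / card (extensions n S q)"
      by (intro arg_cong2[where f = "(/)"] sum.cong) simp_all
    also have "\<dots> \<le> real (m * card {w \<in> {0..<n} - q ` S. w < R}) / (n - card S)"
      using Suc.IH[OF q S, of "h @ [(t h, q (t h))]"] hS True by simp
    also have "\<dots> \<le> real (Suc m * card {w \<in> {0..<n} - q ` S. w < R}) / (n - card S)"
      by (intro divide_right_mono) simp_all
    finally show ?thesis .
  next
    case False
    have a: "t h \<in> {0..<n} - S" using False t by auto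
    define U where "U = {0..<n} - q ` S"
    have N: "card U = n - card S" unfolding U_def by (rule card_unused_positions[OF q S])
    have "(\<Sum>p\<in>extensions n S q. real (fresh_hits S R p (probes t p h (Suc m))))
          / card (extensions n S q)
        \<le> (\<Sum>v\<in>U. of_bool (v < R) + real (m * card {w \<in> U - {v}. w < R}) / (real (card U) - 1))
          / card U"
      unfolding mean_extensions_by_value[OF q S a] U_def[symmetric] N[symmetric]
    proof (intro divide_right_mono sum_mono)
      fix v assume "v \<in> U"
      hence v: "v \<in> {0..<n} - q ` S" by (simp add: U_def)
      have unused: "{0..<n} - redirect q (t h) v ` insert (t h) S = U - {v}"
        using redirect_image[OF q S a v] by (auto simp: U_def)
      have size: "real (n - card (insert (t h) S)) = real (card U) - 1"
        using a S N \<open>v \<in> U\<close> card_gt_0_iff[of U] by (auto simp: finite_subset of_nat_diff U_def)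
      have "insert (t h) S \<subseteq> {0..<n}" and "fst ` set (h @ [(t h, v)]) \<subseteq> insert (t h) S"
        using a S hS by auto
      from Suc.IH[OF redirect_permutes[OF q S a v] this, unfolded unused size]
      show "(\<Sum>p\<in>extensions n (insert (t h) S) (redirect q (t h) v).
              real (fresh_hits S R p (probes t p h (Suc m))))
            / card (extensions n (insert (t h) S) (redirect q (t h) v))
          \<le> of_bool (v < R) + real (m * card {w \<in> U - {v}. w < R}) / (real (card U) - 1)"
        using mean_fresh_hits_probe_le[where t = t and h = h, OF q S a v, of R m] by linarith
    qed simp
    also have "\<dots> \<le> Suc m * card {w \<in> U. w < R} / card U"
      by (rule mean_of_bool_plus_remove_le) (simp add: U_def)
    finally show ?thesis by (simp only: N) (simp add: U_def)
  qed
qed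

text \<open>The probing strategy probes the two elements of each query of s in turn. At odd length
  comparisons ignores the pending first probe, so s is consulted again on the same history and the
  second element of its query is probed.\<close>

fun comparisons :: "nat \<Rightarrow> (nat \<times> nat) list \<Rightarrow> history" where
  "comparisons k ((a, u) # (b, v) # r) = ((a, b), canon_gt k u v) # comparisons k r"
| "comparisons k _ = []"

definition probing_strategy :: "nat \<Rightarrow> strategy \<Rightarrow> (nat \<times> nat) list \<Rightarrow> nat" where
  "probing_strategy k s h =
     (if even (length h) then fst (s (comparisons k h)) else snd (s (comparisons k h)))"

lemma probes_Suc_snoc:
  "probes t p h (Suc m) = probes t p h m @ [(t (probes t p h m), p (t (probes t p h m)))]"
  by (induction m arbitrary: h) (simp, metis probes.simps(2))

lemma length_probes: "length (probes t p h m) = length h + m"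
  by (induction m arbitrary: h) simp_all

lemma comparisons_append:
  "even (length xs) \<Longrightarrow> comparisons k (xs @ ys) = comparisons k xs @ comparisons k ys"
  by (induction k xs rule: comparisons.induct) auto

lemma comparisons_probes:
  "comparisons k (probes (probing_strategy k s) p [] (2 * m)) = run s (inst_gt k p) m"
proof (induction m)
  case 0
  then show ?case by simp
next
  case (Suc m)
  define h where "h = probes (probing_strategy k s) p [] (2 * m)"
  define q where "q = s (comparisons k h)"
  have even: "even (length h)" by (simp add: h_def length_probes)
  have first: "probing_strategy k s h = fst q"
    using even by (simp add: probing_strategy_def q_def)
  have second: "probing_strategy k s (h @ [(fst q, p (fst q))]) = snd q"
    using even comparisons_append[OF even, of k "[(fst q, p (fst q))]"]
    by (simp add: probing_strategy_def q_def)
  have "probes (probing_strategy k s) p [] (2 * Suc m)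
      = h @ [(fst q, p (fst q)), (snd q, p (snd q))]"
    unfolding mult_Suc_right add_2_eq_Suc probes_Suc_snoc h_def[symmetric] first second by simp
  hence "comparisons k (probes (probing_strategy k s) p [] (2 * Suc m))
      = comparisons k h @ [(q, canon_gt k (p (fst q)) (p (snd q)))]"
    using comparisons_append[OF even] by simp
  then show ?case using Suc by (simp add: h_def q_def Let_def inst_gt_def)
qed

lemma touched_comparisons: "touched (comparisons k h) \<subseteq> fst ` set h"
  by (induction k h rule: comparisons.induct) (auto simp: touched_def)

lemma probing_strategy_less: "valid_strategy n s \<Longrightarrow> probing_strategy k s h < n"
  by (simp add: valid_strategy_def probing_strategy_def)

lemma mean_critical_touched_le:
  assumes n: "2 * k + 1 \<le> n" and s: "valid_strategy n s"
  shows "(\<Sum>p | p permutes {0..<n}. real (card (critical n k p \<inter> touched (run s (inst_gt k p) m))))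
      / card {p. p permutes {0..<n}} \<le> real (2 * m * (2 * k + 1)) / n"
proof -
  define t where "t = probing_strategy k s"
  have perms: "{p. p permutes {0..<n}} = extensions n {} id" by (simp add: extensions_def)
  have "critical n k p \<inter> touched (run s (inst_gt k p) m)
      \<subseteq> {a \<in> fst ` set (probes t p [] (2 * m)) - {}. p a < 2 * k + 1}" for p
    using touched_comparisons[of k "probes t p [] (2 * m)"] comparisons_probes[of k s p m]
    by (auto simp: critical_def t_def)
  hence "card (critical n k p \<inter> touched (run s (inst_gt k p) m))
      \<le> fresh_hits {} (2 * k + 1) p (probes t p [] (2 * m))" for p
    unfolding fresh_hits_def by (intro card_mono) auto
  hence "(\<Sum>p | p permutes {0..<n}. real (card (critical n k p \<inter> touched (run s (inst_gt k p) m))))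
      / card {p. p permutes {0..<n}}
      \<le> (\<Sum>p\<in>extensions n {} id. real (fresh_hits {} (2 * k + 1) p (probes t p [] (2 * m))))
      / card (extensions n {} id)"
    unfolding perms by (intro divide_right_mono sum_mono) simp_all
  also have "\<dots> \<le> 2 * m * card {w \<in> {0..<n}. w < 2 * k + 1} / n"
    using mean_fresh_hits_probes_le[where q = id and S = "{}" and h = "[]" and t = t
        and R = "2 * k + 1" and m = "2 * m"] probing_strategy_less[OF s]
    by (simp add: t_def)
  also have "{w \<in> {0..<n}. w < 2 * k + 1} = {0..<2 * k + 1}" using n by auto
  finally show ?thesis by simp
qed

theorem mainTheorem9:
  fixes n k :: nat and A :: "strategy pmf"
  assumes "real (2*k+1) \<le> real n / 4"
    and "\<forall>s \<in> set_pmf A. valid_strategy n s"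
  shows "measure_pmf.expectation (pair_pmf (hard_instance n) A)
           (\<lambda>(p, s). real (card (critical n k p \<inter> touched (run s (inst_gt k p) (n div 4)))))
         \<le> real (2*k+1) / 2"
proof -
  have n: "2 * k + 1 \<le> n" "0 < n" using assms(1) by linarith+
  have "4 * (n div 4) * (2 * k + 1) \<le> n * (2 * k + 1)" by (intro mult_right_mono) simp_all
  hence "real (4 * (n div 4) * (2 * k + 1)) \<le> real (n * (2 * k + 1))" by (simp only: of_nat_le_iff)
  hence arith: "2 * (n div 4) * (2 * k + 1) / n \<le> real (2 * k + 1) / 2"
    using n(2) by (simp add: divide_simps algebra_simps)
  have "(\<Sum>p | p permutes {0..<n}.
          real (card (critical n k p \<inter> touched (run s (inst_gt k p) (n div 4)))))
      / card {p. p permutes {0..<n}} \<le> real (2 * k + 1) / 2" if "s \<in> set_pmf A" for s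
    using order_trans[OF mean_critical_touched_le[OF n(1) assms(2)[rule_format, OF that]] arith] .
  moreover have "{p. p permutes {0..<n}} \<noteq> {}" using permutes_id by blast
  ultimately show ?thesis
    unfolding hard_instance_def
    by (intro expectation_pair_pmf_of_set_le) (auto simp: finite_permutations)
qed

end
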